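(* Let $p(\cdot),r(\cdot)\in\mathcal{P}^{\log}(\mathbb{R}^n)$ with $r(\cdot)\le p(\cdot)$, and let $q(\cdot)$ be defined by $1/r(\cdot)=1/p(\cdot)+1/q(\cdot)$. If $\omega\in\mathbb{A}_{p(\cdot),r(\cdot)}$, then $\omega\in\mathcal{A}_{p(\cdot)}$ and $\omega^{-1}\in\mathcal{A}_{q(\cdot)}$.
   Context: Cubes have sides parallel to the axes. $\mathcal{P}(\mathbb{R}^n)$: measurable $p(\cdot):\mathbb{R}^n\to[1,\infty]$; $p'$ with $1/p+1/p'=1$; $\|f\|_{p(\cdot)}=\inf\{\lambda>0:\int_{\{p<\infty\}}|f/\lambda|^{p(x)}dx+\|(f/\lambda)\chi_{\{p=\infty\}}\|_\infty\le1\}$. $\mathcal{P}^{\log}$: $1/p$ satisfies $|1/p(x)-1/p(y)|\le c_0/(-\log|x-y|)$ for $|x-y|<1/2$ and $|1/p(x)-1/p_\infty|\le c_\infty/\log(e+|x|)$. $\omega\in\mathcal{A}_{p(\cdot)}$: $\|\omega\chi_Q\|_{p(\cdot)}\|\omega^{-1}\chi_Q\|_{p'(\cdot)}\le C|Q|$ for all cubes. $\omega\in\mathbb{A}_{p(\cdot),r(\cdot)}$: $\|\chi_Q\omega\|_{p(\cdot)}\|\chi_Q\omega^{-1}\|_{q(\cdot)}\le C\|\chi_Q\|_{r(\cdot)}$ for all cubes, with $1/r=1/p+1/q$. *)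

theory Defs
  imports "HOL-Analysis.Analysis"
begin

definition recip :: "('a \<Rightarrow> ereal) \<Rightarrow> 'a \<Rightarrow> real" where
  "recip p x = (if p x = \<infinity> then 0 else 1 / real_of_ereal (p x))"

definition from_recip :: "('a \<Rightarrow> real) \<Rightarrow> 'a \<Rightarrow> ereal" where
  "from_recip s x = (if s x = 0 then \<infinity> else ereal (1 / s x))"

definition conj_exp :: "('a \<Rightarrow> ereal) \<Rightarrow> 'a \<Rightarrow> ereal" where
  "conj_exp p = from_recip (\<lambda>x. 1 - recip p x)"

definition quot_exp :: "('a \<Rightarrow> ereal) \<Rightarrow> ('a \<Rightarrow> ereal) \<Rightarrow> 'a \<Rightarrow> ereal" where
  "quot_exp p r = from_recip (\<lambda>x. recip r x - recip p x)"

definition ess_sup_leb :: "('a::euclidean_space \<Rightarrow> ennreal) \<Rightarrow> ennreal" where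
  "ess_sup_leb g = Inf {c. AE x in lebesgue. g x \<le> c}"

definition modular :: "('a::euclidean_space \<Rightarrow> ereal) \<Rightarrow> ('a \<Rightarrow> real) \<Rightarrow> ennreal" where
  "modular p f =
     (\<integral>\<^sup>+ x. indicator {y. p y < \<infinity>} x * ennreal (\<bar>f x\<bar> powr real_of_ereal (p x)) \<partial>lebesgue)
     + ess_sup_leb (\<lambda>x. indicator {y. p y = \<infinity>} x * ennreal \<bar>f x\<bar>)"

text \<open>Luxemburg norm of the variable Lebesgue space L^{p(.)} (value \<infinity> if no \<lambda> works).\<close>
definition vnorm :: "('a::euclidean_space \<Rightarrow> ereal) \<Rightarrow> ('a \<Rightarrow> real) \<Rightarrow> ennreal" where
  "vnorm p f = Inf {ennreal t | t. t > 0 \<and> modular p (\<lambda>x. f x / t) \<le> 1}"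

definition is_cube :: "'a::euclidean_space set \<Rightarrow> bool" where
  "is_cube Q \<longleftrightarrow> (\<exists>a b l. l > 0 \<and> (\<forall>i\<in>Basis. b \<bullet> i - a \<bullet> i = l) \<and> Q = cbox a b)"

definition var_exp :: "('a::euclidean_space \<Rightarrow> ereal) \<Rightarrow> bool" where
  "var_exp p \<longleftrightarrow> p \<in> borel_measurable lebesgue \<and> (\<forall>x. 1 \<le> p x)"

definition var_exp_log :: "('a::euclidean_space \<Rightarrow> ereal) \<Rightarrow> bool" where
  "var_exp_log p \<longleftrightarrow> var_exp p \<and>
     (\<exists>c0. \<forall>x y. 0 < dist x y \<and> dist x y < 1/2 \<longrightarrow>
              \<bar>recip p x - recip p y\<bar> \<le> c0 / (- ln (dist x y))) \<and>
     (\<exists>cinf pinf. 1 \<le> pinf \<and>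
        (\<forall>x. \<bar>recip p x - recip (\<lambda>_. pinf) x\<bar> \<le> cinf / ln (exp 1 + norm x)))"

definition weight :: "('a::euclidean_space \<Rightarrow> real) \<Rightarrow> bool" where
  "weight w \<longleftrightarrow> w \<in> borel_measurable lebesgue \<and> (AE x in lebesgue. 0 < w x)"

definition A_var :: "('a::euclidean_space \<Rightarrow> ereal) \<Rightarrow> ('a \<Rightarrow> real) \<Rightarrow> bool" where
  "A_var p w \<longleftrightarrow> (\<exists>C::real. \<forall>Q. is_cube Q \<longrightarrow>
     vnorm p (\<lambda>x. w x * indicator Q x) * vnorm (conj_exp p) (\<lambda>x. inverse (w x) * indicator Q x)
       \<le> ennreal C * emeasure lebesgue Q)"

definition AA_var :: "('a::euclidean_space \<Rightarrow> ereal) \<Rightarrow> ('a \<Rightarrow> ereal) \<Rightarrow> ('a \<Rightarrow> real) \<Rightarrow> bool" where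
  "AA_var p r w \<longleftrightarrow> (\<exists>C::real. \<forall>Q. is_cube Q \<longrightarrow>
     vnorm p (\<lambda>x. indicator Q x * w x) * vnorm (quot_exp p r) (\<lambda>x. indicator Q x * inverse (w x))
       \<le> ennreal C * vnorm r (indicator Q))"

end

theory Submission
  imports Defs
begin

text \<open>In terms of reciprocal exponents, \<open>1/p' = 1/q + 1/r'\<close> pointwise, so Hoelder's inequality
  in variable Lebesgue spaces gives \<open>\<parallel>w\<^sup>-\<^sup>1\<chi>\<^sub>Q\<parallel>\<^sub>p\<^sub>' \<le> 3 \<parallel>w\<^sup>-\<^sup>1\<chi>\<^sub>Q\<parallel>\<^sub>q \<parallel>\<chi>\<^sub>Q\<parallel>\<^sub>r\<^sub>'\<close>.
  Multiplying by \<open>\<parallel>w\<chi>\<^sub>Q\<parallel>\<^sub>p\<close> and using the \<open>\<bbbA>\<^sub>p\<^sub>,\<^sub>r\<close> condition reduces the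
  \<open>\<A>\<^sub>p\<close> condition to \<open>\<parallel>\<chi>\<^sub>Q\<parallel>\<^sub>r \<parallel>\<chi>\<^sub>Q\<parallel>\<^sub>r\<^sub>' \<lesssim> |Q|\<close>, i.e. to the constant weight
  \<open>1\<close> lying in \<open>\<A>\<^sub>r\<close>.  For \<open>r \<in> \<P>\<^sup>l\<^sup>o\<^sup>g\<close> this holds on small cubes by the local
  log-Hoelder condition and on large cubes by the decay condition at infinity.  The claim for
  \<open>w\<^sup>-\<^sup>1\<close> and \<open>q\<close> is symmetric.\<close>

section \<open>Reciprocal exponents\<close>

text \<open>The modular and the Luxemburg norm in terms of the reciprocal exponent \<open>s = 1/p\<close>,
  which takes values in \<open>[0,1]\<close> with \<open>s = 0\<close> where \<open>p = \<infinity>\<close>.  In this parametrisation the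
  relations \<open>1/p' = 1 - 1/p\<close> and \<open>1/r = 1/p + 1/q\<close> become linear.\<close>

definition rmodular :: "('a::euclidean_space \<Rightarrow> real) \<Rightarrow> ('a \<Rightarrow> real) \<Rightarrow> ennreal" where
  "rmodular s f = (\<integral>\<^sup>+ x. indicator {y. 0 < s y} x * ennreal (\<bar>f x\<bar> powr (1 / s x)) \<partial>lebesgue)
     + ess_sup_leb (\<lambda>x. indicator {y. s y = 0} x * ennreal \<bar>f x\<bar>)"

definition rnorm :: "('a::euclidean_space \<Rightarrow> real) \<Rightarrow> ('a \<Rightarrow> real) \<Rightarrow> ennreal" where
  "rnorm s f = Inf {ennreal t | t. t > 0 \<and> rmodular s (\<lambda>x. f x / t) \<le> 1}"

lemma recip_bounds:
  assumes "1 \<le> p x"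
  shows "0 \<le> recip p x" "recip p x \<le> 1"
  using assms by (cases "p x"; simp add: recip_def)+

lemma modular_eq_rmodular:
  assumes "\<And>x. 1 \<le> p x"
  shows "modular p f = rmodular (recip p) f"
proof -
  have "p x < \<infinity> \<longleftrightarrow> 0 < recip p x" "p x = \<infinity> \<longleftrightarrow> recip p x = 0" for x
    using assms[of x] by (cases "p x"; simp add: recip_def)+
  then have fin: "{y. p y < \<infinity>} = {y. 0 < recip p y}" and inf: "{y. p y = \<infinity>} = {y. recip p y = 0}"
    by auto
  have "real_of_ereal (p x) = 1 / recip p x" if "p x < \<infinity>" for x
    using assms[of x] that by (cases "p x") (auto simp: recip_def)
  then have "indicator {y. 0 < recip p y} x * ennreal (\<bar>f x\<bar> powr real_of_ereal (p x)) =
      indicator {y. 0 < recip p y} x * ennreal (\<bar>f x\<bar> powr (1 / recip p x))" for x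
    by (simp add: indicator_def fin[symmetric])
  then show ?thesis
    unfolding modular_def rmodular_def fin inf by simp
qed

lemma vnorm_eq_rnorm:
  assumes "\<And>x. 1 \<le> p x"
  shows "vnorm p f = rnorm (recip p) f"
  unfolding vnorm_def rnorm_def modular_eq_rmodular[OF assms] ..

lemma recip_from_recip: "recip (from_recip s) = s"
  by (rule ext) (simp add: recip_def from_recip_def)

lemma one_le_from_recip:
  assumes "0 \<le> s x" "s x \<le> 1"
  shows "1 \<le> from_recip s x"
  using assms by (auto simp: from_recip_def)

lemma recip_antimono:
  assumes "1 \<le> r x" "r x \<le> p x"
  shows "recip p x \<le> recip r x"
  using assms by (cases "p x"; cases "r x") (auto simp: recip_def frac_le)

lemma measurable_recip [measurable]:
  assumes "p \<in> borel_measurable lebesgue"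
  shows "recip p \<in> borel_measurable lebesgue"
  unfolding recip_def using assms by measurable

lemma vnorm_conj_exp_eq_rnorm:
  assumes "\<And>x. 1 \<le> p x"
  shows "vnorm (conj_exp p) f = rnorm (\<lambda>x. 1 - recip p x) f"
proof -
  have "1 \<le> conj_exp p x" for x
    unfolding conj_exp_def using recip_bounds[of p x, OF assms] by (intro one_le_from_recip) auto
  then show ?thesis
    by (simp add: vnorm_eq_rnorm conj_exp_def recip_from_recip)
qed

lemma recip_quot_exp: "recip (quot_exp p r) = (\<lambda>x. recip r x - recip p x)"
  unfolding quot_exp_def recip_from_recip ..

lemma one_le_quot_exp:
  assumes "1 \<le> r x" "r x \<le> p x"
  shows "1 \<le> quot_exp p r x"
  unfolding quot_exp_def using recip_antimono[of r x p, OF assms] recip_bounds[of r x] recip_bounds[of p x] assms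
    order.trans[OF assms]
  by (intro one_le_from_recip) auto

lemma A_var_iff_rnorm:
  assumes "\<And>x. 1 \<le> p x"
  shows "A_var p w \<longleftrightarrow> (\<exists>C. \<forall>Q. is_cube Q \<longrightarrow>
    rnorm (recip p) (\<lambda>x. w x * indicator Q x) * rnorm (\<lambda>x. 1 - recip p x) (\<lambda>x. inverse (w x) * indicator Q x)
      \<le> ennreal C * emeasure lebesgue Q)"
  unfolding A_var_def vnorm_eq_rnorm[OF assms] vnorm_conj_exp_eq_rnorm[OF assms] ..

lemma AA_var_iff_rnorm:
  assumes "\<And>x. 1 \<le> r x" "\<And>x. r x \<le> p x"
  shows "AA_var p r w \<longleftrightarrow> (\<exists>C. \<forall>Q. is_cube Q \<longrightarrow>
    rnorm (recip p) (\<lambda>x. w x * indicator Q x) * rnorm (\<lambda>x. recip r x - recip p x) (\<lambda>x. inverse (w x) * indicator Q x)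
      \<le> ennreal C * rnorm (recip r) (indicator Q))"
proof -
  have "\<And>x. 1 \<le> p x" using assms order.trans by blast
  moreover have "\<And>x. 1 \<le> quot_exp p r x" using assms by (rule one_le_quot_exp)
  ultimately show ?thesis
    unfolding AA_var_def by (simp add: vnorm_eq_rnorm assms recip_quot_exp mult.commute)
qed

section \<open>Modular inequalities and Hoelder's inequality\<close>

lemma ess_sup_leb_le:
  assumes "AE x in lebesgue. g x \<le> c"
  shows "ess_sup_leb g \<le> c"
  unfolding ess_sup_leb_def using assms by (auto intro: Inf_lower)

lemma AE_le_ess_sup_leb: "AE x in lebesgue. g x \<le> ess_sup_leb g"
proof (cases "ess_sup_leb g = top")
  case False
  define E where "E = ess_sup_leb g"
  have "AE x in lebesgue. g x \<le> E + ennreal (1 / Suc n)" for n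
  proof -
    have "E < E + ennreal (1 / Suc n)"
      using False unfolding E_def by (simp add: ennreal_add_left_cancel_less less_top)
    then obtain c where "AE x in lebesgue. g x \<le> c" "c < E + ennreal (1 / Suc n)"
      unfolding E_def ess_sup_leb_def Inf_less_iff by blast
    then show ?thesis by (auto elim: eventually_mono)
  qed
  then have "AE x in lebesgue. \<forall>n. g x \<le> E + ennreal (1 / Suc n)"
    by (simp add: AE_all_countable)
  then show ?thesis unfolding E_def[symmetric]
  proof eventually_elim
    case (elim x)
    show "g x \<le> E"
    proof (rule ennreal_le_epsilon)
      fix e :: real assume "0 < e"
      then obtain n where "1 / Suc n < e"
        by (meson nat_approx_posE)
      then have "E + ennreal (1 / Suc n) \<le> E + ennreal e"
        by (intro add_left_mono ennreal_leI) simp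
      then show "g x \<le> E + ennreal e" using elim order.trans by blast
    qed
  qed
qed simp

lemma rmodular_mono:
  assumes "\<And>x. \<bar>f x\<bar> \<le> \<bar>g x\<bar>"
  shows "rmodular s f \<le> rmodular s g"
  unfolding rmodular_def
proof (intro add_mono nn_integral_mono ess_sup_leb_le)
  show "indicator {y. 0 < s y} x * ennreal (\<bar>f x\<bar> powr (1 / s x))
     \<le> indicator {y. 0 < s y} x * ennreal (\<bar>g x\<bar> powr (1 / s x))" for x
    using assms[of x] by (auto simp: indicator_def intro!: ennreal_leI powr_mono2)
  show "AE x in lebesgue. indicator {y. s y = 0} x * ennreal \<bar>f x\<bar>
      \<le> ess_sup_leb (\<lambda>x. indicator {y. s y = 0} x * ennreal \<bar>g x\<bar>)"
    using AE_le_ess_sup_leb[of "\<lambda>x. indicator {y. s y = 0} x * ennreal \<bar>g x\<bar>"]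
  proof eventually_elim
    case (elim x)
    then show ?case
      using assms[of x] by (auto simp: indicator_def intro: order.trans[rotated] ennreal_leI)
  qed
qed

lemma rnorm_le_of_rmodular_le_one:
  assumes "t > 0" "rmodular s (\<lambda>x. f x / t) \<le> 1"
  shows "rnorm s f \<le> ennreal t"
  unfolding rnorm_def using assms by (auto intro!: Inf_lower)

lemma rmodular_le_one_of_rnorm_less:
  assumes "rnorm s f < ennreal a"
  shows "rmodular s (\<lambda>x. f x / a) \<le> 1"
proof -
  obtain t where t: "t > 0" "rmodular s (\<lambda>x. f x / t) \<le> 1" "ennreal t < ennreal a"
    using assms unfolding rnorm_def Inf_less_iff by blast
  then have "t < a" by (simp add: ennreal_less_iff)
  have "rmodular s (\<lambda>x. f x / a) \<le> rmodular s (\<lambda>x. f x / t)"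
    using t \<open>t < a\<close> by (intro rmodular_mono) (auto simp: abs_div intro!: divide_left_mono)
  then show ?thesis using t by simp
qed

lemma rmodular_le_oneD:
  assumes "rmodular s f \<le> 1"
  shows "(\<integral>\<^sup>+ x. indicator {y. 0 < s y} x * ennreal (\<bar>f x\<bar> powr (1 / s x)) \<partial>lebesgue) \<le> 1"
    and "AE x in lebesgue. s x = 0 \<longrightarrow> \<bar>f x\<bar> \<le> 1"
proof -
  show "(\<integral>\<^sup>+ x. indicator {y. 0 < s y} x * ennreal (\<bar>f x\<bar> powr (1 / s x)) \<partial>lebesgue) \<le> 1"
    using assms unfolding rmodular_def by (meson add_increasing2 order.trans zero_le order_refl)
  have "ess_sup_leb (\<lambda>x. indicator {y. s y = 0} x * ennreal \<bar>f x\<bar>) \<le> 1"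
    using assms unfolding rmodular_def by (meson add_increasing order.trans zero_le order_refl)
  with AE_le_ess_sup_leb[of "\<lambda>x. indicator {y. s y = 0} x * ennreal \<bar>f x\<bar>"]
  show "AE x in lebesgue. s x = 0 \<longrightarrow> \<bar>f x\<bar> \<le> 1"
    by (auto elim!: eventually_mono simp: indicator_def dest: order.trans)
qed

lemma rmodular_divide_le:
  assumes [measurable]: "s \<in> borel_measurable lebesgue" "f \<in> borel_measurable lebesgue"
    and s1: "\<And>x. s x \<le> 1" and A: "1 \<le> A"
  shows "rmodular s (\<lambda>x. f x / A) \<le> ennreal (1 / A) * rmodular s f"
proof -
  have "\<bar>f x / A\<bar> powr (1 / s x) \<le> (1 / A) * \<bar>f x\<bar> powr (1 / s x)" if "0 < s x" for x
  proof -
    have "\<bar>f x / A\<bar> powr (1 / s x) = \<bar>f x\<bar> powr (1 / s x) * (1 / A) powr (1 / s x)"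
      using A by (simp add: abs_div powr_divide divide_simps)
    also have "\<dots> \<le> \<bar>f x\<bar> powr (1 / s x) * (1 / A) powr 1"
      using that s1[of x] A by (intro mult_left_mono powr_mono') auto
    finally show ?thesis using A by (simp add: mult.commute)
  qed
  then have "indicator {y. 0 < s y} x * ennreal (\<bar>f x / A\<bar> powr (1 / s x))
     \<le> ennreal (1 / A) * (indicator {y. 0 < s y} x * ennreal (\<bar>f x\<bar> powr (1 / s x)))" for x
    using A by (auto simp: indicator_def ennreal_mult[symmetric] intro!: ennreal_leI)
  then have I: "(\<integral>\<^sup>+ x. indicator {y. 0 < s y} x * ennreal (\<bar>f x / A\<bar> powr (1 / s x)) \<partial>lebesgue)
      \<le> ennreal (1 / A) * (\<integral>\<^sup>+ x. indicator {y. 0 < s y} x * ennreal (\<bar>f x\<bar> powr (1 / s x)) \<partial>lebesgue)"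
    by (subst nn_integral_cmult[symmetric]) (auto intro: nn_integral_mono)
  have E: "ess_sup_leb (\<lambda>x. indicator {y. s y = 0} x * ennreal \<bar>f x / A\<bar>)
     \<le> ennreal (1 / A) * ess_sup_leb (\<lambda>x. indicator {y. s y = 0} x * ennreal \<bar>f x\<bar>)"
    using AE_le_ess_sup_leb[of "\<lambda>x. indicator {y. s y = 0} x * ennreal \<bar>f x\<bar>"]
  proof (intro ess_sup_leb_le, eventually_elim)
    case (elim x)
    have "indicator {y. s y = 0} x * ennreal \<bar>f x / A\<bar>
        = ennreal (1 / A) * (indicator {y. s y = 0} x * ennreal \<bar>f x\<bar>)"
      using A by (auto simp: indicator_def abs_div ennreal_mult[symmetric])
    also have "\<dots> \<le> ennreal (1 / A) * ess_sup_leb (\<lambda>x. indicator {y. s y = 0} x * ennreal \<bar>f x\<bar>)"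
      using elim by (auto intro: mult_left_mono)
    finally show ?case .
  qed
  show ?thesis unfolding rmodular_def using add_mono[OF I E] by (simp add: distrib_left)
qed

lemma rnorm_le_of_rmodular_le:
  assumes "s \<in> borel_measurable lebesgue" "f \<in> borel_measurable lebesgue"
    and "\<And>x. s x \<le> 1" and A: "1 \<le> A" and t: "0 < t"
    and M: "rmodular s (\<lambda>x. f x / t) \<le> ennreal A"
  shows "rnorm s f \<le> ennreal (A * t)"
proof (rule rnorm_le_of_rmodular_le_one)
  show "0 < A * t" using A t by simp
  have "rmodular s (\<lambda>x. f x / (A * t)) = rmodular s (\<lambda>x. (f x / t) / A)"
    by (simp add: mult.commute)
  also have "\<dots> \<le> ennreal (1 / A) * rmodular s (\<lambda>x. f x / t)"
    using assms by (intro rmodular_divide_le) auto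
  also have "\<dots> \<le> ennreal (1 / A) * ennreal A"
    by (rule mult_left_mono[OF M]) simp
  also have "\<dots> = 1" using A by (simp add: ennreal_mult[symmetric])
  finally show "rmodular s (\<lambda>x. f x / (A * t)) \<le> 1" .
qed

lemma powr_mult_le_powr_add_powr:
  fixes a b s1 s2 :: real
  assumes "0 \<le> a" "0 \<le> b" "0 < s1" "0 < s2"
  shows "(a * b) powr (1 / (s1 + s2)) \<le> a powr (1 / s1) + b powr (1 / s2)"
proof -
  define A where "A = a powr (1 / s1)"
  define B where "B = b powr (1 / s2)"
  define m where "m = max A B"
  have "0 \<le> A" "0 \<le> B" unfolding A_def B_def by auto
  have "a = A powr s1" "b = B powr s2"
    unfolding A_def B_def powr_powr using assms by simp_all
  then have "(a * b) powr (1 / (s1 + s2)) = A powr (s1 / (s1 + s2)) * B powr (s2 / (s1 + s2))"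
    by (simp add: powr_mult powr_powr)
  also have "\<dots> \<le> m powr (s1 / (s1 + s2)) * m powr (s2 / (s1 + s2))"
    using assms \<open>0 \<le> A\<close> \<open>0 \<le> B\<close> by (intro mult_mono powr_mono2) (auto simp: m_def)
  also have "\<dots> = m"
    using assms \<open>0 \<le> A\<close> by (simp add: m_def powr_add[symmetric] add_divide_distrib[symmetric])
  also have "\<dots> \<le> A + B" using \<open>0 \<le> A\<close> \<open>0 \<le> B\<close> by (simp add: m_def)
  finally show ?thesis unfolding A_def B_def .
qed

lemma powr_mult_le_integrands:
  fixes a b s1 s2 :: real
  assumes "0 \<le> s1" "0 \<le> s2" "0 < s1 + s2"
    and "s1 = 0 \<longrightarrow> \<bar>a\<bar> \<le> 1" "s2 = 0 \<longrightarrow> \<bar>b\<bar> \<le> 1"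
  shows "\<bar>a * b\<bar> powr (1 / (s1 + s2))
    \<le> (if 0 < s1 then \<bar>a\<bar> powr (1 / s1) else 0) + (if 0 < s2 then \<bar>b\<bar> powr (1 / s2) else 0)"
proof -
  consider "0 < s1" "0 < s2" | "s1 = 0" "0 < s2" | "0 < s1" "s2 = 0"
    using assms by linarith
  then show ?thesis
  proof cases
    case 1
    then show ?thesis using powr_mult_le_powr_add_powr[of "\<bar>a\<bar>" "\<bar>b\<bar>" s1 s2] by (simp add: abs_mult)
  next
    case 2
    then have "\<bar>a * b\<bar> \<le> \<bar>b\<bar>" using assms by (simp add: abs_mult mult_left_le_one_le)
    then show ?thesis using 2 by (auto intro!: powr_mono2)
  next
    case 3
    then have "\<bar>a * b\<bar> \<le> \<bar>a\<bar>" using assms by (simp add: abs_mult mult_right_le_one_le)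
    then show ?thesis using 3 by (auto intro!: powr_mono2)
  qed
qed

lemma rmodular_mult_le:
  assumes [measurable]: "s1 \<in> borel_measurable lebesgue" "s2 \<in> borel_measurable lebesgue"
      "f \<in> borel_measurable lebesgue" "g \<in> borel_measurable lebesgue"
    and s1: "\<And>x. 0 \<le> s1 x" and s2: "\<And>x. 0 \<le> s2 x"
    and M1: "rmodular s1 f \<le> 1" and M2: "rmodular s2 g \<le> 1"
  shows "rmodular (\<lambda>x. s1 x + s2 x) (\<lambda>x. f x * g x) \<le> 3"
proof -
  define u where "u x = indicator {y. 0 < s1 y} x * ennreal (\<bar>f x\<bar> powr (1 / s1 x))" for x
  define v where "v x = indicator {y. 0 < s2 y} x * ennreal (\<bar>g x\<bar> powr (1 / s2 x))" for x
  note AE1 = rmodular_le_oneD(2)[OF M1] and AE2 = rmodular_le_oneD(2)[OF M2]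
  have "AE x in lebesgue. indicator {y. 0 < s1 y + s2 y} x
      * ennreal (\<bar>f x * g x\<bar> powr (1 / (s1 x + s2 x))) \<le> u x + v x"
    using AE1 AE2
  proof eventually_elim
    case (elim x)
    let ?a = "if 0 < s1 x then \<bar>f x\<bar> powr (1 / s1 x) else 0"
    let ?b = "if 0 < s2 x then \<bar>g x\<bar> powr (1 / s2 x) else 0"
    have "u x + v x = ennreal (?a + ?b)"
      by (simp add: u_def v_def)
    moreover have "0 < s1 x + s2 x \<Longrightarrow> \<bar>f x * g x\<bar> powr (1 / (s1 x + s2 x)) \<le> ?a + ?b"
      using elim s1[of x] s2[of x] by (intro powr_mult_le_integrands) auto
    ultimately show ?case
      by (cases "0 < s1 x + s2 x")
        (simp_all add: indicator_def ennreal_leI del: ennreal_plus split del: if_split)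
  qed
  then have "(\<integral>\<^sup>+ x. indicator {y. 0 < s1 y + s2 y} x
      * ennreal (\<bar>f x * g x\<bar> powr (1 / (s1 x + s2 x))) \<partial>lebesgue) \<le> (\<integral>\<^sup>+ x. u x + v x \<partial>lebesgue)"
    by (rule nn_integral_mono_AE)
  also have "\<dots> = integral\<^sup>N lebesgue u + integral\<^sup>N lebesgue v"
    by (rule nn_integral_add) (simp_all add: u_def v_def)
  also have "\<dots> \<le> 1 + 1"
    using rmodular_le_oneD(1)[OF M1] rmodular_le_oneD(1)[OF M2]
    unfolding u_def v_def by (rule add_mono)
  finally have I: "(\<integral>\<^sup>+ x. indicator {y. 0 < s1 y + s2 y} x
      * ennreal (\<bar>f x * g x\<bar> powr (1 / (s1 x + s2 x))) \<partial>lebesgue) \<le> 2"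
    by simp
  have E: "ess_sup_leb (\<lambda>x. indicator {y. s1 y + s2 y = 0} x * ennreal \<bar>f x * g x\<bar>) \<le> 1"
    using AE1 AE2
  proof (intro ess_sup_leb_le, eventually_elim)
    case (elim x)
    have "\<bar>f x * g x\<bar> \<le> 1" if "s1 x + s2 x = 0"
      using elim that s1[of x] s2[of x] by (simp add: abs_mult mult_le_one)
    then show ?case by (simp add: indicator_def)
  qed
  show ?thesis unfolding rmodular_def using add_mono[OF I E] by simp
qed

lemma rnorm_mult_le_of_less:
  assumes "s1 \<in> borel_measurable lebesgue" "s2 \<in> borel_measurable lebesgue"
    and "f \<in> borel_measurable lebesgue" "g \<in> borel_measurable lebesgue"
    and "\<And>x. 0 \<le> s1 x" "\<And>x. 0 \<le> s2 x" "\<And>x. s1 x + s2 x \<le> 1"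
    and a: "rnorm s1 f < ennreal a" "0 < a" and b: "rnorm s2 g < ennreal b" "0 < b"
  shows "rnorm (\<lambda>x. s1 x + s2 x) (\<lambda>x. f x * g x) \<le> ennreal (3 * (a * b))"
proof (rule rnorm_le_of_rmodular_le)
  have "rmodular (\<lambda>x. s1 x + s2 x) (\<lambda>x. (f x / a) * (g x / b)) \<le> 3"
    using assms by (intro rmodular_mult_le rmodular_le_one_of_rnorm_less) auto
  then show "rmodular (\<lambda>x. s1 x + s2 x) (\<lambda>x. f x * g x / (a * b)) \<le> ennreal 3"
    by simp
qed (use assms in auto)

lemma rnorm_mult_le:
  assumes "s1 \<in> borel_measurable lebesgue" "s2 \<in> borel_measurable lebesgue"
    and "f \<in> borel_measurable lebesgue" "g \<in> borel_measurable lebesgue"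
    and "\<And>x. 0 \<le> s1 x" "\<And>x. 0 \<le> s2 x" "\<And>x. s1 x + s2 x \<le> 1"
    and fin: "rnorm s1 f < \<infinity>" "rnorm s2 g < \<infinity>"
  shows "rnorm (\<lambda>x. s1 x + s2 x) (\<lambda>x. f x * g x) \<le> 3 * rnorm s1 f * rnorm s2 g"
proof -
  obtain a where a: "rnorm s1 f = ennreal a" "0 \<le> a"
    using fin(1) by (cases "rnorm s1 f" rule: ennreal_cases) auto
  obtain b where b: "rnorm s2 g = ennreal b" "0 \<le> b"
    using fin(2) by (cases "rnorm s2 g" rule: ennreal_cases) auto
  define e where "e n = inverse (real (Suc n))" for n
  have "0 < e n" for n unfolding e_def by simp
  then have le: "rnorm (\<lambda>x. s1 x + s2 x) (\<lambda>x. f x * g x) \<le> ennreal (3 * ((a + e n) * (b + e n)))" for n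
    using a b by (intro rnorm_mult_le_of_less[OF assms(1-7)]) (auto simp: ennreal_less_iff add_nonneg_pos)
  have "(\<lambda>n. 3 * ((a + e n) * (b + e n))) \<longlonglongrightarrow> 3 * ((a + 0) * (b + 0))"
    unfolding e_def by (intro tendsto_intros LIMSEQ_inverse_real_of_nat)
  then have "(\<lambda>n. ennreal (3 * ((a + e n) * (b + e n)))) \<longlonglongrightarrow> ennreal (3 * (a * b))"
    by (intro tendsto_ennrealI) simp
  then have "rnorm (\<lambda>x. s1 x + s2 x) (\<lambda>x. f x * g x) \<le> ennreal (3 * (a * b))"
    by (rule LIMSEQ_le_const) (use le in auto)
  also have "\<dots> = 3 * rnorm s1 f * rnorm s2 g"
    using a b by (simp add: ennreal_mult mult.assoc)
  finally show ?thesis .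
qed

section \<open>Norms of characteristic functions\<close>

lemma rnorm_indicator_finite:
  assumes Q: "Q \<in> sets lebesgue" "emeasure lebesgue Q < \<infinity>"
    and "s \<in> borel_measurable lebesgue" "\<And>x. 0 \<le> s x" "\<And>x. s x \<le> 1"
  shows "rnorm s (indicator Q) < \<infinity>"
proof -
  obtain \<mu> where \<mu>: "emeasure lebesgue Q = ennreal \<mu>" "0 \<le> \<mu>"
    using Q(2) by (cases "emeasure lebesgue Q" rule: ennreal_cases) auto
  have "(\<integral>\<^sup>+ x. indicator {y. 0 < s y} x * ennreal (\<bar>indicator Q x :: real\<bar> powr (1 / s x)) \<partial>lebesgue)
      \<le> (\<integral>\<^sup>+ x. indicator Q x \<partial>lebesgue)"
    by (rule nn_integral_mono) (auto simp: indicator_def)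
  moreover have "ess_sup_leb (\<lambda>x. indicator {y. s y = 0} x * ennreal \<bar>indicator Q x :: real\<bar>) \<le> 1"
    by (rule ess_sup_leb_le) (auto simp: indicator_def)
  ultimately have "rmodular s (\<lambda>x. indicator Q x / 1) \<le> ennreal (\<mu> + 1)"
    using Q \<mu> unfolding rmodular_def by (simp add: add_mono)
  then have "rnorm s (indicator Q) \<le> ennreal ((\<mu> + 1) * 1)"
    using assms \<mu> by (intro rnorm_le_of_rmodular_le) auto
  then show ?thesis
    using le_less_trans by fastforce
qed

lemma rnorm_mult_indicator_le:
  fixes g :: "'a::euclidean_space \<Rightarrow> real"
  assumes "s1 \<in> borel_measurable lebesgue" "s2 \<in> borel_measurable lebesgue"
    "g \<in> borel_measurable lebesgue" and Q: "Q \<in> sets lebesgue" "emeasure lebesgue Q < \<infinity>"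
    and "\<And>x. 0 \<le> s1 x" "\<And>x. 0 \<le> s2 x" "\<And>x. s1 x + s2 x \<le> 1"
    and "rnorm s1 (\<lambda>x. g x * indicator Q x) < \<infinity>"
  shows "rnorm (\<lambda>x. s1 x + s2 x) (\<lambda>x. g x * indicator Q x)
    \<le> 3 * rnorm s1 (\<lambda>x. g x * indicator Q x) * rnorm s2 (indicator Q)"
proof -
  have "s2 x \<le> 1" for x using assms(6,8)[of x] by linarith
  then have "rnorm s2 (indicator Q) < \<infinity>" using assms(2,7) by (intro rnorm_indicator_finite[OF Q])
  moreover have "(\<lambda>x. g x * indicator Q x) \<in> borel_measurable lebesgue"
    using assms(3) Q(1) by measurable
  moreover have "(indicator Q :: 'a \<Rightarrow> real) \<in> borel_measurable lebesgue"
    using Q(1) by measurable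
  ultimately have "rnorm (\<lambda>x. s1 x + s2 x) (\<lambda>x. (g x * indicator Q x) * indicator Q x)
      \<le> 3 * rnorm s1 (\<lambda>x. g x * indicator Q x) * rnorm s2 (indicator Q)"
    using assms(1,2,6-9) by (intro rnorm_mult_le)
  moreover have "(\<lambda>x. (g x * indicator Q x) * indicator Q x) = (\<lambda>x. g x * indicator Q x :: real)"
    by (auto simp: indicator_def)
  ultimately show ?thesis by simp
qed

lemma rnorm_indicator_le_powr_small:
  assumes Q: "Q \<in> sets lebesgue" "emeasure lebesgue Q = ennreal \<mu>" "0 < \<mu>" "\<mu> \<le> 1"
    and "s \<in> borel_measurable lebesgue" "\<And>x. s x \<le> 1"
    and a: "\<And>x. x \<in> Q \<Longrightarrow> a \<le> s x"
  shows "rnorm s (indicator Q) \<le> ennreal (2 * \<mu> powr a)"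
proof (rule rnorm_le_of_rmodular_le)
  have "\<bar>indicator Q x / \<mu> powr a\<bar> powr (1 / s x) \<le> 1 / \<mu>" if "x \<in> Q" "0 < s x" for x
  proof -
    have "\<bar>indicator Q x / \<mu> powr a\<bar> powr (1 / s x) = (\<mu> powr (- a)) powr (1 / s x)"
      using that Q by (simp add: powr_minus divide_inverse)
    also have "\<dots> = \<mu> powr (- (a / s x))" by (simp add: powr_powr)
    also have "\<dots> \<le> \<mu> powr (-1)"
      using that a[of x] Q by (intro powr_mono') (auto simp: field_simps)
    finally show ?thesis using Q by (simp add: powr_minus divide_inverse)
  qed
  then have "indicator {y. 0 < s y} x * ennreal (\<bar>indicator Q x / \<mu> powr a\<bar> powr (1 / s x))
      \<le> ennreal (1 / \<mu>) * indicator Q x" for x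
    by (auto simp: indicator_def intro!: ennreal_leI)
  then have "(\<integral>\<^sup>+ x. indicator {y. 0 < s y} x * ennreal (\<bar>indicator Q x / \<mu> powr a\<bar> powr (1 / s x)) \<partial>lebesgue)
      \<le> (\<integral>\<^sup>+ x. ennreal (1 / \<mu>) * indicator Q x \<partial>lebesgue)"
    by (rule nn_integral_mono)
  also have "\<dots> = 1"
    using Q by (simp add: nn_integral_cmult_indicator ennreal_mult[symmetric])
  finally have I: "(\<integral>\<^sup>+ x. indicator {y. 0 < s y} x
      * ennreal (\<bar>indicator Q x / \<mu> powr a\<bar> powr (1 / s x)) \<partial>lebesgue) \<le> 1" .
  have "1 \<le> \<mu> powr a" if "x \<in> Q" "s x = 0" for x
  proof -
    have "\<mu> powr 0 \<le> \<mu> powr a"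
      using that a[of x] Q by (intro powr_mono') auto
    then show ?thesis using Q by simp
  qed
  then have "ess_sup_leb (\<lambda>x. indicator {y. s y = 0} x * ennreal \<bar>indicator Q x / \<mu> powr a\<bar>) \<le> 1"
    by (intro ess_sup_leb_le AE_I2) (auto simp: indicator_def divide_le_eq)
  with I show "rmodular s (\<lambda>x. indicator Q x / \<mu> powr a) \<le> ennreal 2"
    unfolding rmodular_def using add_mono by fastforce
qed (use assms in auto)

lemma emeasure_cube:
  fixes a b :: "'a::euclidean_space"
  assumes "\<And>i. i \<in> Basis \<Longrightarrow> b \<bullet> i - a \<bullet> i = l" "0 \<le> l"
  shows "emeasure lebesgue (cbox a b) = ennreal (l ^ DIM('a))"
proof -
  have "\<And>i. i \<in> Basis \<Longrightarrow> a \<bullet> i \<le> b \<bullet> i"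
    using assms by (metis diff_ge_0_iff_ge)
  then have "emeasure lebesgue (cbox a b) = ennreal (\<Prod>i\<in>Basis. (b - a) \<bullet> i)"
    by simp
  also have "(\<Prod>i\<in>Basis. (b - a) \<bullet> i) = (\<Prod>i\<in>(Basis::'a set). l)"
    using assms by (intro prod.cong) (auto simp: inner_diff_left)
  finally show ?thesis by simp
qed

lemma decay_le_dyadic:
  fixes x :: "'a::real_normed_vector" and m :: nat
  obtains k where "norm x \<le> 2 ^ k" "(exp 1 + norm x) powr (- real m) \<le> 2 ^ m / 2 ^ (k * m)"
proof -
  obtain k where k: "norm x \<le> 2 ^ k" "\<And>j. j < k \<Longrightarrow> \<not> norm x \<le> 2 ^ j"
    using real_arch_pow[of 2 "norm x"] exists_least_iff[of "\<lambda>k. norm x \<le> (2::real) ^ k"]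
    by (auto dest: less_imp_le)
  have "(exp 1 + norm x) powr (- real m) \<le> 2 ^ m / 2 ^ (k * m)"
  proof (cases k)
    case 0
    have "1 \<le> exp 1 + norm x"
      using exp_ge_add_one_self[of 1] norm_ge_zero[of x] by linarith
    then have "1 \<le> (exp 1 + norm x) powr real m"
      by (rule ge_one_powr_ge_zero) simp
    then have "(exp 1 + norm x) powr (- real m) \<le> 1"
      by (simp add: powr_minus inverse_le_1_iff)
    then show ?thesis using 0 by (simp add: order.trans[OF _ one_le_power])
  next
    case (Suc j)
    then have "2 ^ j \<le> exp 1 + norm x"
      using k(2)[of j] exp_gt_zero[of 1] by linarith
    then have "(exp 1 + norm x) powr (- real m) \<le> (2 ^ j) powr (- real m)"
      by (intro powr_mono2') auto
    also have "\<dots> = 2 ^ m / 2 ^ (k * m)"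
      using Suc by (simp add: powr_minus powr_realpow power_mult power_add divide_inverse)
    finally show ?thesis .
  qed
  with k(1) show ?thesis by (rule that)
qed

lemma nn_integral_decay_finite:
  "(\<integral>\<^sup>+ x. ennreal ((exp 1 + norm x) powr (- real (Suc DIM('a))))
    \<partial>(lebesgue :: 'a::euclidean_space measure)) < \<infinity>"
proof -
  define n where "n = DIM('a)"
  define m where "m = Suc n"
  define B :: "nat \<Rightarrow> 'a set" where "B k = cbox (- ((2::real) ^ k) *\<^sub>R One) ((2 ^ k) *\<^sub>R One)" for k
  define a :: "nat \<Rightarrow> real" where "a k = 2 ^ m / 2 ^ (k * m)" for k
  have [measurable]: "B k \<in> sets lebesgue" for k
    unfolding B_def by simp
  have inB: "x \<in> B k" if "norm x \<le> 2 ^ k" for x k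
    using Basis_le_norm[of _ x] that by (force simp: B_def mem_box abs_le_iff)
  have pointwise: "ennreal ((exp 1 + norm x) powr (- real m)) \<le> (\<Sum>j. ennreal (a j) * indicator (B j) x)" for x
  proof -
    obtain k where "x \<in> B k" "(exp 1 + norm x) powr (- real m) \<le> a k"
      using decay_le_dyadic[of x m] inB unfolding a_def by metis
    then have "ennreal ((exp 1 + norm x) powr (- real m)) \<le> ennreal (a k) * indicator (B k) x"
      by (simp add: ennreal_leI)
    also have "\<dots> \<le> (\<Sum>j. ennreal (a j) * indicator (B j) x)"
      using sum_le_suminf[OF summableI, of "{k}" "\<lambda>j. ennreal (a j) * indicator (B j) x"]
        \<open>x \<in> B k\<close> by simp
    finally show ?thesis .
  qed
  have "(\<integral>\<^sup>+ x. ennreal ((exp 1 + norm x) powr (- real m)) \<partial>(lebesgue :: 'a measure))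
      \<le> (\<integral>\<^sup>+ x. (\<Sum>j. ennreal (a j) * indicator (B j) x) \<partial>(lebesgue :: 'a measure))"
    by (intro nn_integral_mono pointwise)
  also have "\<dots> = (\<Sum>j. \<integral>\<^sup>+ x. ennreal (a j) * indicator (B j) x \<partial>lebesgue)"
    by (rule nn_integral_suminf) simp
  also have "\<dots> = (\<Sum>j. ennreal (2 ^ (m + n) * (1 / 2) ^ j))"
  proof (rule suminf_cong)
    fix j
    have "emeasure lebesgue (B j) = ennreal ((2 * 2 ^ j) ^ n)"
      unfolding B_def n_def by (rule emeasure_cube) (auto simp: inner_diff_left)
    moreover have "a j * (2 * 2 ^ j) ^ n = 2 ^ (m + n) * (1 / 2) ^ j"
    proof -
      have "(2::real) ^ (j * m) = 2 ^ (j * n) * 2 ^ j"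
        by (simp add: m_def power_add)
      moreover have "(2 * 2 ^ j :: real) ^ n = 2 ^ n * 2 ^ (j * n)"
        by (simp add: power_mult_distrib power_mult)
      ultimately show ?thesis
        unfolding a_def power_one_over by (simp add: power_add)
    qed
    moreover have "0 \<le> a j" unfolding a_def by simp
    ultimately show "(\<integral>\<^sup>+ x. ennreal (a j) * indicator (B j) x \<partial>lebesgue) = ennreal (2 ^ (m + n) * (1 / 2) ^ j)"
      by (simp add: nn_integral_cmult_indicator ennreal_mult[symmetric])
  qed
  also have "\<dots> < \<infinity>"
  proof -
    have "summable (\<lambda>j. 2 ^ (m + n) * (1 / 2 :: real) ^ j)"
      by (intro summable_mult summable_geometric) simp
    then have "(\<Sum>j. ennreal (2 ^ (m + n) * (1 / 2) ^ j)) \<noteq> \<infinity>"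
      unfolding infinity_ennreal_def by (rule ennreal_suminf_neq_top) simp
    then show ?thesis by (simp add: less_top)
  qed
  finally show ?thesis unfolding m_def n_def .
qed

lemma exp_neg_divide_le_log_decay:
  fixes s sinf c m u L :: real
  assumes "0 < s" "0 < sinf" "0 \<le> c" "1 \<le> L" "s - sinf \<le> c / L" "0 \<le> m" "0 < u"
    and "u / s < m * L"
  shows "exp (- (u / s)) \<le> exp (m * c / sinf) * exp (- (u / sinf))"
proof -
  have "u * (s - sinf) / s \<le> m * c"
  proof (cases "s \<le> sinf")
    case True
    then have "u * (s - sinf) / s \<le> 0"
      using assms by (intro divide_nonpos_pos mult_nonneg_nonpos) auto
    moreover have "0 \<le> m * c" using assms by simp
    ultimately show ?thesis by linarith
  next
    case False
    have "u * (s - sinf) / s = (u / s) * (s - sinf)" by simp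
    also have "\<dots> \<le> (m * L) * (c / L)"
      using assms False by (intro mult_mono) auto
    also have "\<dots> = m * c" using assms by simp
    finally show ?thesis .
  qed
  moreover have "u / sinf - u / s = (u * (s - sinf) / s) / sinf"
    using assms by (simp add: field_simps)
  ultimately have "- (u / s) \<le> m * c / sinf + - (u / sinf)"
    using divide_right_mono[of "u * (s - sinf) / s" "m * c" sinf] assms by simp
  then show ?thesis by (simp flip: exp_add)
qed

lemma decay_integrand_le:
  fixes s sinf c m \<mu> L :: real
  assumes s: "0 < s" and "0 \<le> sinf" "0 \<le> c" "1 \<le> L" and decay: "s - sinf \<le> c / L"
    and "1 \<le> \<mu>" "0 \<le> m"
  shows "(1 / (exp (m * c + 1) * \<mu> powr sinf)) powr (1 / s) \<le> exp (m * c / sinf) / \<mu> + exp (- (m * L))"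
proof -
  define u where "u = m * c + 1 + sinf * ln \<mu>"
  have "0 \<le> m * c" "0 \<le> sinf * ln \<mu>" using assms by simp_all
  then have u: "m * c + 1 \<le> u" "sinf * ln \<mu> \<le> u" "0 < u" unfolding u_def by linarith+
  have "exp (m * c + 1) * \<mu> powr sinf = exp u"
    unfolding u_def using assms by (simp add: powr_def exp_add)
  then have "(1 / (exp (m * c + 1) * \<mu> powr sinf)) powr (1 / s) = exp (- u) powr (1 / s)"
    by (simp add: exp_minus divide_inverse)
  also have "\<dots> = exp (- (u / s))" by (simp add: powr_def)
  finally have lhs: "(1 / (exp (m * c + 1) * \<mu> powr sinf)) powr (1 / s) = exp (- (u / s))" .
  txt \<open>For \<open>sinf = 0\<close> the first summand is the junk value \<open>exp 0 / \<mu>\<close>.\<close>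
  have "exp (- (u / s)) \<le> exp (m * c / sinf) / \<mu> + exp (- (m * L))"
  proof (cases "m * L \<le> u / s")
    case True
    then show ?thesis using assms by (simp add: add_increasing)
  next
    case False
    have "0 < sinf"
    proof (rule ccontr)
      assume "\<not> 0 < sinf"
      then have "s * L \<le> c" using decay assms by (simp add: le_divide_eq)
      then have "m * L * s \<le> m * c" using assms by (metis mult.assoc mult.commute mult_left_mono)
      moreover have "u < m * L * s" using False s by (simp add: not_le pos_divide_less_eq)
      ultimately show False using u by linarith
    qed
    have "exp (- (u / s)) \<le> exp (m * c / sinf) * exp (- (u / sinf))"
      using False assms u \<open>0 < sinf\<close> by (intro exp_neg_divide_le_log_decay) auto
    also have "exp (- (u / sinf)) \<le> exp (- ln \<mu>)"
      using u \<open>0 < sinf\<close> by (simp add: le_divide_eq mult.commute)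
    also have "exp (- ln \<mu>) = 1 / \<mu>"
      using assms by (simp add: exp_minus divide_inverse)
    finally show ?thesis by (simp add: add_increasing2)
  qed
  then show ?thesis unfolding lhs .
qed

text \<open>With \<open>t = e\<^sup>m\<^sup>c\<^sup>+\<^sup>1 \<mu>\<^sup>s\<^sup>\<infinity>\<close>, the integrand of the modular of \<open>\<chi>\<^sub>Q / t\<close> is at most
  \<open>e\<^sup>m\<^sup>c\<^sup>/\<^sup>s\<^sup>\<infinity> / \<mu>\<close> on \<open>Q\<close> plus the integrable tail \<open>(e + |x|)\<^sup>-\<^sup>m\<close>, uniformly in \<open>Q\<close>.\<close>

lemma rmodular_indicator_le_large:
  fixes s :: "'a::euclidean_space \<Rightarrow> real" and m :: real
  assumes "0 \<le> sinf" "0 \<le> c" "0 \<le> m" and decay: "\<And>x. s x - sinf \<le> c / ln (exp 1 + norm x)"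
    and J: "(\<integral>\<^sup>+ x. ennreal ((exp 1 + norm x) powr (- m)) \<partial>(lebesgue :: 'a measure)) = ennreal J"
      "0 \<le> J"
    and Q: "Q \<in> sets lebesgue" "emeasure lebesgue Q = ennreal \<mu>" "1 \<le> \<mu>"
  shows "rmodular s (\<lambda>x. indicator Q x / (exp (m * c + 1) * \<mu> powr sinf))
    \<le> ennreal (exp (m * c / sinf) + J + 1)"
proof -
  define t where "t = exp (m * c + 1) * \<mu> powr sinf"
  define D where "D = exp (m * c / sinf)"
  have "1 \<le> exp (m * c + 1)" "1 \<le> \<mu> powr sinf"
    using assms by (simp_all add: ge_one_powr_ge_zero)
  then have "1 * 1 \<le> t" unfolding t_def by (intro mult_mono) auto
  then have t: "1 \<le> t" by simp
  have pointwise: "indicator {y. 0 < s y} x * ennreal (\<bar>indicator Q x / t\<bar> powr (1 / s x))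
      \<le> ennreal (D / \<mu>) * indicator Q x + ennreal ((exp 1 + norm x) powr (- m))" for x
  proof (cases "x \<in> Q \<and> 0 < s x")
    case True
    define L where "L = ln (exp 1 + norm x)"
    have "1 \<le> L" unfolding L_def
      using ln_mono[of "exp 1" "exp 1 + norm x"] by simp
    have "\<bar>indicator Q x / t\<bar> powr (1 / s x) \<le> D / \<mu> + exp (- (m * L))"
      unfolding t_def D_def using True decay[of x] \<open>1 \<le> L\<close> assms
      by (simp add: L_def decay_integrand_le del: exp_le_cancel_iff)
    also have "exp (- (m * L)) = (exp 1 + norm x) powr (- m)"
      unfolding L_def powr_def using add_pos_nonneg[OF exp_gt_zero[of 1] norm_ge_zero[of x]] by simp
    finally have "ennreal (\<bar>indicator Q x / t\<bar> powr (1 / s x))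
        \<le> ennreal (D / \<mu> + (exp 1 + norm x) powr (- m))"
      by (rule ennreal_leI)
    also have "\<dots> = ennreal (D / \<mu>) + ennreal ((exp 1 + norm x) powr (- m))"
      using Q(3) by (simp add: D_def)
    finally show ?thesis using True by (simp add: indicator_def)
  qed (auto simp: indicator_def)
  have "(\<integral>\<^sup>+ x. indicator {y. 0 < s y} x * ennreal (\<bar>indicator Q x / t\<bar> powr (1 / s x)) \<partial>lebesgue)
      \<le> (\<integral>\<^sup>+ x. ennreal (D / \<mu>) * indicator Q x + ennreal ((exp 1 + norm x) powr (- m)) \<partial>lebesgue)"
    by (intro nn_integral_mono pointwise)
  also have "\<dots> = (\<integral>\<^sup>+ x. ennreal (D / \<mu>) * indicator Q x \<partial>lebesgue)
      + (\<integral>\<^sup>+ x. ennreal ((exp 1 + norm x) powr (- m)) \<partial>(lebesgue :: 'a measure))"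
  proof (rule nn_integral_add)
    show "(\<lambda>x. ennreal (D / \<mu>) * indicator Q x) \<in> borel_measurable lebesgue"
      using Q(1) by measurable
    show "(\<lambda>x::'a. ennreal ((exp 1 + norm x) powr (- m))) \<in> borel_measurable lebesgue"
      by measurable (simp_all add: id_def[symmetric])
  qed
  also have "\<dots> = ennreal (D + J)"
    using Q J unfolding D_def by (simp add: nn_integral_cmult_indicator ennreal_mult[symmetric])
  finally have I: "(\<integral>\<^sup>+ x. indicator {y. 0 < s y} x
      * ennreal (\<bar>indicator Q x / t\<bar> powr (1 / s x)) \<partial>lebesgue) \<le> ennreal (D + J)" .
  have E: "ess_sup_leb (\<lambda>x. indicator {y. s y = 0} x * ennreal \<bar>indicator Q x / t\<bar>) \<le> 1"
    using t by (intro ess_sup_leb_le AE_I2) (auto simp: indicator_def divide_le_eq)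
  show ?thesis
    using add_mono[OF I E] J(2) unfolding rmodular_def t_def D_def by (simp add: ennreal_plus)
qed

lemma rnorm_indicator_le_powr_large:
  fixes s :: "'a::euclidean_space \<Rightarrow> real"
  assumes "s \<in> borel_measurable lebesgue" "\<And>x. s x \<le> 1"
    and "0 \<le> sinf" "0 \<le> c" "\<And>x. s x - sinf \<le> c / ln (exp 1 + norm x)"
  obtains C where "0 \<le> C"
    and "\<And>Q \<mu>. Q \<in> sets lebesgue \<Longrightarrow> emeasure lebesgue Q = ennreal \<mu> \<Longrightarrow> 1 \<le> \<mu>
      \<Longrightarrow> rnorm s (indicator Q) \<le> ennreal (C * \<mu> powr sinf)"
proof -
  define m where "m = real (Suc DIM('a))"
  obtain J where J: "(\<integral>\<^sup>+ x. ennreal ((exp 1 + norm x) powr (- m)) \<partial>(lebesgue :: 'a measure)) = ennreal J"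
    "0 \<le> J"
    using nn_integral_decay_finite[where 'a='a] unfolding m_def[symmetric]
    by (cases "(\<integral>\<^sup>+ x. ennreal ((exp 1 + norm x) powr (- m)) \<partial>(lebesgue :: 'a measure))"
        rule: ennreal_cases) auto
  define B where "B = exp (m * c / sinf) + J + 1"
  define K where "K = exp (m * c + 1)"
  have "0 \<le> m" unfolding m_def by simp
  have "1 \<le> B" "1 \<le> K" unfolding B_def K_def using J(2) \<open>0 \<le> m\<close> assms(4)
    by (simp_all add: add_increasing)
  have "rnorm s (indicator Q) \<le> ennreal (B * (K * \<mu> powr sinf))"
    if Q: "Q \<in> sets lebesgue" "emeasure lebesgue Q = ennreal \<mu>" "1 \<le> \<mu>" for Q \<mu>
  proof (rule rnorm_le_of_rmodular_le)
    show "rmodular s (\<lambda>x. indicator Q x / (K * \<mu> powr sinf)) \<le> ennreal B"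
      unfolding K_def B_def using assms \<open>0 \<le> m\<close> J Q by (intro rmodular_indicator_le_large)
    show "0 < K * \<mu> powr sinf" using \<open>1 \<le> K\<close> Q(3) by simp
  qed (use assms Q \<open>1 \<le> B\<close> in auto)
  moreover have "0 \<le> B * K" using \<open>1 \<le> B\<close> \<open>1 \<le> K\<close> by simp
  ultimately show ?thesis using that by (metis mult.assoc)
qed

lemma is_cubeE:
  fixes Q :: "'a::euclidean_space set"
  assumes "is_cube Q"
  obtains a b l where "Q = cbox a b" "0 < l" "\<And>i. i \<in> Basis \<Longrightarrow> b \<bullet> i - a \<bullet> i = l"
    "emeasure lebesgue Q = ennreal (l ^ DIM('a))"
  using assms emeasure_cube unfolding is_cube_def by (metis less_imp_le)

lemma dist_le_in_cube:
  fixes a b x y :: "'a::euclidean_space" and l :: real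
  assumes "\<And>i. i \<in> Basis \<Longrightarrow> b \<bullet> i - a \<bullet> i = l" "x \<in> cbox a b" "y \<in> cbox a b"
  shows "dist x y \<le> DIM('a) * l"
proof -
  have "dist x y \<le> (\<Sum>i\<in>Basis. \<bar>(x - y) \<bullet> i\<bar>)"
    unfolding dist_norm by (rule norm_le_l1)
  also have "\<dots> \<le> (\<Sum>i\<in>(Basis::'a set). l)"
  proof (rule sum_mono)
    fix i :: 'a assume i: "i \<in> Basis"
    then have "a \<bullet> i \<le> x \<bullet> i" "x \<bullet> i \<le> b \<bullet> i" "a \<bullet> i \<le> y \<bullet> i" "y \<bullet> i \<le> b \<bullet> i"
      using assms(2,3) by (auto simp: mem_box)
    then show "\<bar>(x - y) \<bullet> i\<bar> \<le> l" using assms(1)[OF i] by (simp add: inner_diff_left)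
  qed
  finally show ?thesis by simp
qed

lemma log_hoelder_le_of_dist_le:
  assumes loc: "\<And>x y. 0 < dist x y \<Longrightarrow> dist x y < 1/2 \<Longrightarrow> \<bar>s x - s y\<bar> \<le> c0 / (- ln (dist x y))"
    and "0 \<le> c0" and d: "dist x y \<le> \<rho>" "\<rho> < 1/2"
  shows "\<bar>s x - s y\<bar> \<le> c0 / (- ln \<rho>)"
proof (cases "x = y")
  case True
  have "0 \<le> \<rho>" using d(1) zero_le_dist[of x y] by linarith
  then have "ln \<rho> \<le> 0" using d(2) by (cases "\<rho> = 0") auto
  then show ?thesis using True \<open>0 \<le> c0\<close> by (simp add: divide_nonneg_nonpos)
next
  case False
  then have "0 < dist x y" by simp
  have "ln (dist x y) \<le> ln \<rho>"
    using \<open>0 < dist x y\<close> d(1) by (metis ln_mono)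
  moreover have "ln \<rho> < 0"
    using \<open>0 < dist x y\<close> d by (intro ln_less_zero) linarith+
  ultimately have "c0 / (- ln (dist x y)) \<le> c0 / (- ln \<rho>)"
    using \<open>0 \<le> c0\<close> by (intro divide_left_mono mult_pos_pos) auto
  moreover have "\<bar>s x - s y\<bar> \<le> c0 / (- ln (dist x y))"
    using \<open>0 < dist x y\<close> d by (intro loc) auto
  ultimately show ?thesis by linarith
qed

text \<open>The product of \<open>\<mu>\<^sup>s\<^sup>-\<^sup>\<delta>\<close> and \<open>\<mu>\<^sup>1\<^sup>-\<^sup>s\<^sup>-\<^sup>\<delta>\<close> loses only the factor \<open>\<mu>\<^sup>-\<^sup>2\<^sup>\<delta>\<close>, and
  the log-Hoelder modulus \<open>\<delta>\<close> on a cube of side \<open>l\<close> is exactly what keeps it bounded.\<close>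

lemma cube_volume_powr_log_hoelder_le:
  fixes l c0 :: real and n :: nat
  assumes n: "1 \<le> n" and l: "0 < l" "l \<le> 1 / (4 * real n ^ 2)" and c0: "0 \<le> c0"
  shows "(l ^ n) powr (- 2 * (c0 / (- ln (n * l)))) \<le> exp (4 * c0 * n)"
proof -
  define A where "A = - ln l"
  define N where "N = ln n"
  have "1 \<le> real n ^ 2" using n by simp
  then have "1 / (4 * real n ^ 2) \<le> 1 / real n ^ 2"
    using n by (intro divide_left_mono) auto
  then have "l \<le> 1 / real n ^ 2" using l(2) by linarith
  then have "ln l \<le> ln (1 / real n ^ 2)" using l n by simp
  also have "ln (1 / real n ^ 2) = - 2 * N" unfolding N_def using n by (simp add: ln_div ln_realpow)
  finally have "2 * N \<le> A" unfolding A_def by simp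
  moreover have "1 / (4 * real n ^ 2) \<le> 1 / 4"
    using n by (intro divide_left_mono) auto
  then have "l < 1" using l(2) by linarith
  then have "0 < A" unfolding A_def using l(1) by simp
  ultimately have AN: "A / 2 \<le> A - N" "0 < A - N" by simp_all
  have "A / (A - N) \<le> 2" using AN by (simp add: divide_le_eq)
  then have "2 * c0 * n * (A / (A - N)) \<le> 2 * c0 * n * 2"
    using c0 by (intro mult_left_mono) auto
  then have bound: "exp (2 * c0 * n * (A / (A - N))) \<le> exp (4 * c0 * n)" by simp
  have "- ln (n * l) = A - N" unfolding A_def N_def using n l by (simp add: ln_mult)
  then have "(l ^ n) powr (- 2 * (c0 / (- ln (n * l)))) = exp ((- 2 * (c0 / (A - N))) * (n * (- A)))"
    unfolding powr_def using l by (simp add: ln_realpow A_def)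
  also have "(- 2 * (c0 / (A - N))) * (n * (- A)) = 2 * c0 * n * (A / (A - N))"
    by (simp add: field_simps)
  finally show ?thesis using bound by simp
qed

lemma rnorm_indicator_dual_le_small_cube:
  fixes s :: "'a::euclidean_space \<Rightarrow> real" and c0 :: real
  assumes s: "s \<in> borel_measurable lebesgue" "\<And>x. 0 \<le> s x" "\<And>x. s x \<le> 1" and "0 \<le> c0"
    and loc: "\<And>x y. 0 < dist x y \<Longrightarrow> dist x y < 1/2 \<Longrightarrow> \<bar>s x - s y\<bar> \<le> c0 / (- ln (dist x y))"
    and cube: "\<And>i. i \<in> Basis \<Longrightarrow> b \<bullet> i - a \<bullet> i = l" "0 < l" "l \<le> 1 / (4 * DIM('a) ^ 2)"
  shows "rnorm s (indicator (cbox a b)) * rnorm (\<lambda>x. 1 - s x) (indicator (cbox a b))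
    \<le> ennreal (4 * exp (4 * c0 * DIM('a)) * l ^ DIM('a))"
proof -
  define n where "n = DIM('a)"
  define \<mu> where "\<mu> = l ^ n"
  define \<delta> where "\<delta> = c0 / (- ln (n * l))"
  have "1 \<le> n" unfolding n_def by (simp add: DIM_positive Suc_leI)
  have "n * l < 1 / 2"
  proof -
    have "n * l \<le> n * (1 / (4 * n ^ 2))" using cube(3) unfolding n_def by (intro mult_left_mono) auto
    also have "\<dots> = 1 / (4 * n)" by (simp add: power2_eq_square)
    also have "\<dots> < 1 / 2" using \<open>1 \<le> n\<close> by (simp add: divide_less_eq)
    finally show ?thesis .
  qed
  moreover have "1 * l \<le> n * l"
    using \<open>1 \<le> n\<close> cube(2) by (intro mult_right_mono) auto
  ultimately have "l \<le> 1" by linarith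
  then have \<mu>: "0 < \<mu>" "\<mu> \<le> 1" unfolding \<mu>_def using cube(2) by (simp_all add: power_le_one)
  have Q: "cbox a b \<in> sets lebesgue" "emeasure lebesgue (cbox a b) = ennreal \<mu>"
    unfolding \<mu>_def n_def using emeasure_cube[OF cube(1)] cube(2) by auto
  have "a \<bullet> i \<le> b \<bullet> i" if "i \<in> Basis" for i
    using cube(1)[OF that] cube(2) by simp
  then have "a \<in> cbox a b" by (simp add: mem_box)
  then have osc: "\<bar>s x - s a\<bar> \<le> \<delta>" if "x \<in> cbox a b" for x
    unfolding \<delta>_def using dist_le_in_cube[OF cube(1) that] \<open>n * l < 1 / 2\<close>
    by (intro log_hoelder_le_of_dist_le[OF loc \<open>0 \<le> c0\<close>]) (auto simp: n_def)
  have "rnorm s (indicator (cbox a b)) \<le> ennreal (2 * \<mu> powr (s a - \<delta>))"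
    using osc Q \<mu> s by (intro rnorm_indicator_le_powr_small) force+
  moreover have "rnorm (\<lambda>x. 1 - s x) (indicator (cbox a b)) \<le> ennreal (2 * \<mu> powr ((1 - s a) - \<delta>))"
    using osc Q \<mu> s by (intro rnorm_indicator_le_powr_small) force+
  ultimately have "rnorm s (indicator (cbox a b)) * rnorm (\<lambda>x. 1 - s x) (indicator (cbox a b))
      \<le> ennreal (2 * \<mu> powr (s a - \<delta>)) * ennreal (2 * \<mu> powr ((1 - s a) - \<delta>))"
    by (rule mult_mono) auto
  also have "\<dots> = ennreal (4 * \<mu> powr (1 + - 2 * \<delta>))"
    using \<mu> by (simp add: ennreal_mult[symmetric] powr_add[symmetric] algebra_simps)
  also have "\<dots> = ennreal (4 * \<mu> * \<mu> powr (- 2 * \<delta>))"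
    using \<mu> by (subst powr_add) simp
  also have "\<dots> \<le> ennreal (4 * \<mu> * exp (4 * c0 * n))"
    using cube_volume_powr_log_hoelder_le[OF \<open>1 \<le> n\<close> cube(2) _ \<open>0 \<le> c0\<close>] cube(3) \<mu>
    unfolding \<mu>_def \<delta>_def n_def by (intro ennreal_leI mult_left_mono) auto
  finally show ?thesis by (simp add: \<mu>_def n_def mult_ac)
qed

lemma rnorm_indicator_dual_le_unit_measure:
  assumes "Q \<in> sets lebesgue" "emeasure lebesgue Q = ennreal \<mu>" "0 < \<nu>" "\<nu> \<le> \<mu>" "\<mu> \<le> 1"
    and "s \<in> borel_measurable lebesgue" "\<And>x. 0 \<le> s x" "\<And>x. s x \<le> 1"
  shows "rnorm s (indicator Q) * rnorm (\<lambda>x. 1 - s x) (indicator Q) \<le> ennreal (4 / \<nu> * \<mu>)"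
proof -
  have "rnorm s (indicator Q) \<le> ennreal (2 * \<mu> powr 0)"
    "rnorm (\<lambda>x. 1 - s x) (indicator Q) \<le> ennreal (2 * \<mu> powr 0)"
    using assms by (intro rnorm_indicator_le_powr_small; force)+
  then have "rnorm s (indicator Q) * rnorm (\<lambda>x. 1 - s x) (indicator Q) \<le> ennreal 2 * ennreal 2"
    using assms by (intro mult_mono) auto
  also have "\<dots> \<le> ennreal (4 / \<nu> * \<mu>)"
    using assms by (simp flip: ennreal_mult add: ennreal_leI field_simps)
  finally show ?thesis .
qed

lemma rnorm_indicator_dual_le_large:
  fixes s :: "'a::euclidean_space \<Rightarrow> real" and c sinf :: real
  assumes s: "s \<in> borel_measurable lebesgue" "\<And>x. 0 \<le> s x" "\<And>x. s x \<le> 1"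
    and "0 \<le> c" and decay: "\<And>x. \<bar>s x - sinf\<bar> \<le> c / ln (exp 1 + norm x)"
    and sinf: "0 \<le> sinf" "sinf \<le> 1"
  obtains C where "0 \<le> C" and "\<And>Q \<mu>. Q \<in> sets lebesgue \<Longrightarrow> emeasure lebesgue Q = ennreal \<mu> \<Longrightarrow> 1 \<le> \<mu>
    \<Longrightarrow> rnorm s (indicator Q) * rnorm (\<lambda>x. 1 - s x) (indicator Q) \<le> ennreal (C * \<mu>)"
proof -
  have decay1: "s x - sinf \<le> c / ln (exp 1 + norm x)"
    and decay2: "(1 - s x) - (1 - sinf) \<le> c / ln (exp 1 + norm x)" for x
    using decay[of x] by (simp_all add: abs_le_iff)
  obtain C1 where "0 \<le> C1" and C1: "\<And>Q \<mu>. Q \<in> sets lebesgue \<Longrightarrow> emeasure lebesgue Q = ennreal \<mu>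
      \<Longrightarrow> 1 \<le> \<mu> \<Longrightarrow> rnorm s (indicator Q) \<le> ennreal (C1 * \<mu> powr sinf)"
    using rnorm_indicator_le_powr_large[OF s(1,3) sinf(1) \<open>0 \<le> c\<close> decay1] by blast
  have "(\<lambda>x. 1 - s x) \<in> borel_measurable lebesgue" "0 \<le> 1 - sinf" "\<And>x. 1 - s x \<le> 1"
    using s sinf by auto
  then obtain C2 where "0 \<le> C2" and C2: "\<And>Q \<mu>. Q \<in> sets lebesgue \<Longrightarrow> emeasure lebesgue Q = ennreal \<mu>
      \<Longrightarrow> 1 \<le> \<mu> \<Longrightarrow> rnorm (\<lambda>x. 1 - s x) (indicator Q) \<le> ennreal (C2 * \<mu> powr (1 - sinf))"
    using rnorm_indicator_le_powr_large[OF _ _ _ \<open>0 \<le> c\<close> decay2] by blast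
  have "rnorm s (indicator Q) * rnorm (\<lambda>x. 1 - s x) (indicator Q) \<le> ennreal ((C1 * C2) * \<mu>)"
    if "Q \<in> sets lebesgue" "emeasure lebesgue Q = ennreal \<mu>" "1 \<le> \<mu>" for Q \<mu>
  proof -
    have "rnorm s (indicator Q) * rnorm (\<lambda>x. 1 - s x) (indicator Q)
        \<le> ennreal (C1 * \<mu> powr sinf) * ennreal (C2 * \<mu> powr (1 - sinf))"
      using that by (intro mult_mono C1 C2) auto
    also have "\<dots> = ennreal ((C1 * C2) * (\<mu> powr sinf * \<mu> powr (1 - sinf)))"
      using \<open>0 \<le> C1\<close> \<open>0 \<le> C2\<close> by (simp add: ennreal_mult[symmetric] mult_ac)
    also have "\<mu> powr sinf * \<mu> powr (1 - sinf) = \<mu>"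
      using that by (simp flip: powr_add)
    finally show ?thesis .
  qed
  moreover have "0 \<le> C1 * C2" using \<open>0 \<le> C1\<close> \<open>0 \<le> C2\<close> by simp
  ultimately show ?thesis using that by blast
qed

text \<open>Cubes of side at most \<open>l\<^sub>0 = 1/(4n\<^sup>2)\<close> are handled by the local log-Hoelder condition,
  cubes of measure at least one by the decay at infinity, and the cubes in between have
  measure bounded below.\<close>

lemma rnorm_indicator_dual_le:
  fixes s :: "'a::euclidean_space \<Rightarrow> real" and c0 c sinf :: real
  assumes s: "s \<in> borel_measurable lebesgue" "\<And>x. 0 \<le> s x" "\<And>x. s x \<le> 1"
    and "0 \<le> c0" and loc: "\<And>x y. 0 < dist x y \<Longrightarrow> dist x y < 1/2 \<Longrightarrow> \<bar>s x - s y\<bar> \<le> c0 / (- ln (dist x y))"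
    and "0 \<le> c" and decay: "\<And>x. \<bar>s x - sinf\<bar> \<le> c / ln (exp 1 + norm x)"
    and sinf: "0 \<le> sinf" "sinf \<le> 1"
  obtains K where "\<And>Q. is_cube Q \<Longrightarrow>
    rnorm s (indicator Q) * rnorm (\<lambda>x. 1 - s x) (indicator Q) \<le> ennreal K * emeasure lebesgue Q"
proof -
  define n where "n = DIM('a)"
  define l0 :: real where "l0 = 1 / (4 * n ^ 2)"
  have "0 < l0" unfolding l0_def n_def by simp
  obtain C where "0 \<le> C" and large: "\<And>Q \<mu>. Q \<in> sets lebesgue \<Longrightarrow> emeasure lebesgue Q = ennreal \<mu>
      \<Longrightarrow> 1 \<le> \<mu> \<Longrightarrow> rnorm s (indicator Q) * rnorm (\<lambda>x. 1 - s x) (indicator Q) \<le> ennreal (C * \<mu>)"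
    using rnorm_indicator_dual_le_large[OF s \<open>0 \<le> c\<close> decay sinf] by blast
  define K where "K = max (4 * exp (4 * c0 * n)) (max (4 / l0 ^ n) C)"
  have "rnorm s (indicator Q) * rnorm (\<lambda>x. 1 - s x) (indicator Q) \<le> ennreal K * emeasure lebesgue Q"
    if "is_cube Q" for Q
  proof -
    obtain a b l where Q: "Q = cbox a b" "0 < l" "\<And>i. i \<in> Basis \<Longrightarrow> b \<bullet> i - a \<bullet> i = l"
      and \<mu>: "emeasure lebesgue Q = ennreal (l ^ n)"
      using is_cubeE[OF \<open>is_cube Q\<close>] unfolding n_def by blast
    have "Q \<in> sets lebesgue" using Q(1) by simp
    consider "l \<le> l0" | "l0 < l" "l \<le> 1" | "1 < l" by linarith
    then obtain K' where K': "K' \<le> K"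
      and bound: "rnorm s (indicator Q) * rnorm (\<lambda>x. 1 - s x) (indicator Q) \<le> ennreal (K' * l ^ n)"
    proof cases
      case 1
      then have "l \<le> 1 / (4 * DIM('a) ^ 2)" by (simp add: l0_def n_def)
      from rnorm_indicator_dual_le_small_cube[OF s \<open>0 \<le> c0\<close> loc Q(3,2) this]
      show ?thesis using that[of "4 * exp (4 * c0 * n)"] Q(1) by (simp add: K_def n_def)
    next
      case 2
      then have "l0 ^ n \<le> l ^ n" "l ^ n \<le> 1" using \<open>0 < l0\<close> by (simp_all add: power_mono power_le_one)
      then have "rnorm s (indicator Q) * rnorm (\<lambda>x. 1 - s x) (indicator Q) \<le> ennreal (4 / l0 ^ n * l ^ n)"
        using \<open>Q \<in> sets lebesgue\<close> \<mu> s \<open>0 < l0\<close> by (intro rnorm_indicator_dual_le_unit_measure[of Q "l ^ n" "l0 ^ n"]) auto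
      then show ?thesis using that[of "4 / l0 ^ n"] by (simp add: K_def)
    next
      case 3
      then have "1 \<le> l ^ n" by (simp add: one_le_power)
      with \<open>Q \<in> sets lebesgue\<close> \<mu> have "rnorm s (indicator Q) * rnorm (\<lambda>x. 1 - s x) (indicator Q)
          \<le> ennreal (C * l ^ n)" by (rule large)
      then show ?thesis using that[of C] by (simp add: K_def)
    qed
    have "ennreal (K' * l ^ n) \<le> ennreal (K * l ^ n)"
      using K' Q(2) by (intro ennreal_leI mult_right_mono) auto
    with bound have "rnorm s (indicator Q) * rnorm (\<lambda>x. 1 - s x) (indicator Q) \<le> ennreal (K * l ^ n)"
      by (rule order.trans)
    moreover have "0 \<le> K" unfolding K_def by (simp add: le_max_iff_disj)
    ultimately show ?thesis using \<mu> Q(2) by (simp add: ennreal_mult)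
  qed
  then show ?thesis using that by blast
qed

lemma var_exp_log_rnorm_indicator_dual_le:
  fixes r :: "'a::euclidean_space \<Rightarrow> ereal"
  assumes "var_exp_log r"
  shows "\<exists>K. \<forall>Q. is_cube Q \<longrightarrow>
    rnorm (recip r) (indicator Q) * rnorm (\<lambda>x. 1 - recip r x) (indicator Q) \<le> ennreal K * emeasure lebesgue Q"
proof -
  obtain c0 c pinf where r: "r \<in> borel_measurable lebesgue" "\<And>x. 1 \<le> r x"
    and loc: "\<And>x y. 0 < dist x y \<Longrightarrow> dist x y < 1/2 \<Longrightarrow> \<bar>recip r x - recip r y\<bar> \<le> c0 / (- ln (dist x y))"
    and "1 \<le> pinf" and decay: "\<And>x. \<bar>recip r x - recip (\<lambda>_. pinf) x\<bar> \<le> c / ln (exp 1 + norm x)"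
    using assms unfolding var_exp_log_def var_exp_def by blast
  define sinf where "sinf = recip (\<lambda>_::'a. pinf) 0"
  have sinf: "0 \<le> sinf" "sinf \<le> 1" "\<And>x::'a. recip (\<lambda>_. pinf) x = sinf"
    unfolding sinf_def using recip_bounds[of "\<lambda>_. pinf"] \<open>1 \<le> pinf\<close> by (auto simp: recip_def)
  have "\<bar>recip r 0 - sinf\<bar> \<le> c" using decay[of 0] sinf(3) by simp
  then have "0 \<le> c" by (meson abs_ge_zero order.trans)
  have loc': "\<bar>recip r x - recip r y\<bar> \<le> max c0 0 / (- ln (dist x y))"
    if "0 < dist x y" "dist x y < 1/2" for x y
  proof -
    have "ln (dist x y) < 0" using that by (intro ln_less_zero) linarith+
    then have "c0 / (- ln (dist x y)) \<le> max c0 0 / (- ln (dist x y))"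
      by (intro divide_right_mono) auto
    then show ?thesis using loc[OF that] by linarith
  qed
  have decay': "\<bar>recip r x - sinf\<bar> \<le> c / ln (exp 1 + norm x)" for x
    using decay[of x] unfolding sinf(3) .
  have "recip r \<in> borel_measurable lebesgue" "\<And>x. 0 \<le> recip r x" "\<And>x. recip r x \<le> 1"
    using r recip_bounds[of r, OF r(2)] by auto
  from rnorm_indicator_dual_le[OF this max.cobounded2 loc' \<open>0 \<le> c\<close> decay' sinf(1,2)]
  show ?thesis by blast
qed

section \<open>From the \<open>\<bbbA>\<^sub>p\<^sub>,\<^sub>r\<close> condition to the \<open>\<A>\<^sub>p\<close> condition\<close>

text \<open>In the application \<open>sa = 1/p\<close>, \<open>sb = 1/q\<close>, \<open>sr = 1/r\<close>, \<open>f = w\<close> and \<open>g = w\<^sup>-\<^sup>1\<close>.\<close>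

lemma rnorm_A_bound_of_AA_bound:
  fixes sa sb sr :: "'a::euclidean_space \<Rightarrow> real"
  assumes AA: "\<exists>C. \<forall>Q. is_cube Q \<longrightarrow> rnorm sa (\<lambda>x. f x * indicator Q x)
      * rnorm sb (\<lambda>x. g x * indicator Q x) \<le> ennreal C * rnorm sr (indicator Q)"
    and dual: "\<exists>K. \<forall>Q. is_cube Q \<longrightarrow>
      rnorm sr (indicator Q) * rnorm (\<lambda>x. 1 - sr x) (indicator Q) \<le> ennreal K * emeasure lebesgue Q"
    and meas: "sb \<in> borel_measurable lebesgue" "sr \<in> borel_measurable lebesgue"
      "g \<in> borel_measurable lebesgue"
    and exps: "\<And>x. 0 \<le> sa x" "\<And>x. 0 \<le> sb x" "\<And>x. sa x + sb x = sr x" "\<And>x. sr x \<le> 1"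
  shows "\<exists>C. \<forall>Q. is_cube Q \<longrightarrow> rnorm sa (\<lambda>x. f x * indicator Q x)
    * rnorm (\<lambda>x. 1 - sa x) (\<lambda>x. g x * indicator Q x) \<le> ennreal C * emeasure lebesgue Q"
proof -
  obtain C K where
    XY: "\<And>Q. is_cube Q \<Longrightarrow> rnorm sa (\<lambda>x. f x * indicator Q x)
      * rnorm sb (\<lambda>x. g x * indicator Q x) \<le> ennreal C * rnorm sr (indicator Q)"
    and RR: "\<And>Q. is_cube Q \<Longrightarrow>
      rnorm sr (indicator Q) * rnorm (\<lambda>x. 1 - sr x) (indicator Q) \<le> ennreal K * emeasure lebesgue Q"
    using AA dual by blast
  have [measurable]: "(\<lambda>x. 1 - sr x) \<in> borel_measurable lebesgue" using meas(2) by measurable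
  have sr: "0 \<le> sr x" "0 \<le> 1 - sr x" "sb x + (1 - sr x) \<le> 1" for x
    using exps[of x] by auto
  have "(\<lambda>x. sb x + (1 - sr x)) = (\<lambda>x. 1 - sa x)" using exps(3) by (auto simp: algebra_simps)
  note holder = rnorm_mult_indicator_le[of sb "\<lambda>x. 1 - sr x", unfolded this]
  have "rnorm sa (\<lambda>x. f x * indicator Q x) * rnorm (\<lambda>x. 1 - sa x) (\<lambda>x. g x * indicator Q x)
      \<le> ennreal (3 * max C 0 * max K 0) * emeasure lebesgue Q" if "is_cube Q" for Q
  proof -
    define X where "X = rnorm sa (\<lambda>x. f x * indicator Q x)"
    define Y where "Y = rnorm sb (\<lambda>x. g x * indicator Q x)"
    define R where "R = rnorm sr (indicator Q)"
    define R' where "R' = rnorm (\<lambda>x. 1 - sr x) (indicator Q)"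
    obtain a b l where "Q = cbox a b" "emeasure lebesgue Q = ennreal (l ^ DIM('a))"
      using is_cubeE[OF \<open>is_cube Q\<close>] by blast
    then have Q: "Q \<in> sets lebesgue" "emeasure lebesgue Q < \<infinity>" by auto
    have "R < \<infinity>"
      unfolding R_def using meas(2) sr exps(4) by (intro rnorm_indicator_finite[OF Q])
    show "X * rnorm (\<lambda>x. 1 - sa x) (\<lambda>x. g x * indicator Q x)
        \<le> ennreal (3 * max C 0 * max K 0) * emeasure lebesgue Q"
    proof (cases "X = 0")
      case False
      have "ennreal C * R < \<infinity>" using \<open>R < \<infinity>\<close> by (simp add: ennreal_mult_less_top)
      with XY[OF that] have "X * Y < \<infinity>" unfolding X_def Y_def R_def by (rule le_less_trans)
      with False have "Y < \<infinity>" by (auto simp: ennreal_mult_less_top top.not_eq_extremum)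
      then have Z: "rnorm (\<lambda>x. 1 - sa x) (\<lambda>x. g x * indicator Q x) \<le> 3 * Y * R'"
        unfolding Y_def R'_def
        by (rule holder[OF meas(1) \<open>(\<lambda>x. 1 - sr x) \<in> borel_measurable lebesgue\<close> meas(3) Q
            exps(2) sr(2,3)])
      have "X * rnorm (\<lambda>x. 1 - sa x) (\<lambda>x. g x * indicator Q x) \<le> 3 * (X * Y) * R'"
        using mult_left_mono[OF Z, of X] by (simp add: ac_simps)
      also have "\<dots> \<le> 3 * (ennreal C * R) * R'"
        unfolding X_def Y_def R_def by (intro mult_right_mono mult_left_mono XY that) auto
      also have "\<dots> = 3 * ennreal C * (R * R')" by (simp add: ac_simps)
      also have "\<dots> \<le> 3 * ennreal (max C 0) * (ennreal (max K 0) * emeasure lebesgue Q)"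
        unfolding R_def R'_def by (intro mult_mono order.trans[OF RR[OF that]] ennreal_leI) auto
      also have "\<dots> = ennreal (3 * max C 0 * max K 0) * emeasure lebesgue Q"
        by (simp add: ennreal_mult ac_simps)
      finally show ?thesis .
    qed simp
  qed
  then show ?thesis by blast
qed

lemma rnorm_A_bounds_of_AA_bound:
  fixes sa sb sr :: "'a::euclidean_space \<Rightarrow> real"
  assumes AA: "\<exists>C. \<forall>Q. is_cube Q \<longrightarrow> rnorm sa (\<lambda>x. f x * indicator Q x)
      * rnorm sb (\<lambda>x. g x * indicator Q x) \<le> ennreal C * rnorm sr (indicator Q)"
    and dual: "\<exists>K. \<forall>Q. is_cube Q \<longrightarrow>
      rnorm sr (indicator Q) * rnorm (\<lambda>x. 1 - sr x) (indicator Q) \<le> ennreal K * emeasure lebesgue Q"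
    and meas: "sa \<in> borel_measurable lebesgue" "sb \<in> borel_measurable lebesgue"
      "sr \<in> borel_measurable lebesgue" "f \<in> borel_measurable lebesgue" "g \<in> borel_measurable lebesgue"
    and exps: "\<And>x. 0 \<le> sa x" "\<And>x. 0 \<le> sb x" "\<And>x. sa x + sb x = sr x" "\<And>x. sr x \<le> 1"
  shows "(\<exists>C. \<forall>Q. is_cube Q \<longrightarrow> rnorm sa (\<lambda>x. f x * indicator Q x)
      * rnorm (\<lambda>x. 1 - sa x) (\<lambda>x. g x * indicator Q x) \<le> ennreal C * emeasure lebesgue Q)
    \<and> (\<exists>C. \<forall>Q. is_cube Q \<longrightarrow> rnorm sb (\<lambda>x. g x * indicator Q x)
      * rnorm (\<lambda>x. 1 - sb x) (\<lambda>x. f x * indicator Q x) \<le> ennreal C * emeasure lebesgue Q)"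
proof
  show "\<exists>C. \<forall>Q. is_cube Q \<longrightarrow> rnorm sa (\<lambda>x. f x * indicator Q x)
      * rnorm (\<lambda>x. 1 - sa x) (\<lambda>x. g x * indicator Q x) \<le> ennreal C * emeasure lebesgue Q"
    using AA dual meas(2,3,5) exps by (rule rnorm_A_bound_of_AA_bound)
  have "\<exists>C. \<forall>Q. is_cube Q \<longrightarrow> rnorm sb (\<lambda>x. g x * indicator Q x)
      * rnorm sa (\<lambda>x. f x * indicator Q x) \<le> ennreal C * rnorm sr (indicator Q)"
    using AA by (simp only: mult.commute)
  moreover have "\<And>x. sb x + sa x = sr x" using exps(3) by (simp add: add.commute)
  ultimately show "\<exists>C. \<forall>Q. is_cube Q \<longrightarrow> rnorm sb (\<lambda>x. g x * indicator Q x)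
      * rnorm (\<lambda>x. 1 - sb x) (\<lambda>x. f x * indicator Q x) \<le> ennreal C * emeasure lebesgue Q"
    using dual meas(1,3,4) exps(2,1,4) by (intro rnorm_A_bound_of_AA_bound)
qed

theorem mainTheorem9:
  fixes p r :: "'a::euclidean_space \<Rightarrow> ereal" and w :: "'a \<Rightarrow> real"
  assumes "var_exp_log p" and "var_exp_log r"
    and "\<forall>x. r x \<le> p x"
    and "weight w"
    and "AA_var p r w"
  shows "A_var p w \<and> A_var (quot_exp p r) (\<lambda>x. inverse (w x))"
proof -
  have p: "p \<in> borel_measurable lebesgue" "\<And>x. 1 \<le> p x"
    and r: "r \<in> borel_measurable lebesgue" "\<And>x. 1 \<le> r x" "\<And>x. r x \<le> p x"
    and [measurable]: "w \<in> borel_measurable lebesgue"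
    using assms(1-4) unfolding var_exp_log_def var_exp_def weight_def by auto
  have exps: "0 \<le> recip p x" "0 \<le> recip r x - recip p x" "recip r x \<le> 1" "1 \<le> quot_exp p r x" for x
    using recip_bounds[of p x] recip_bounds[of r x] recip_antimono[of r x p] one_le_quot_exp[of r x p] p r
    by auto
  from assms(5) show ?thesis
    unfolding AA_var_iff_rnorm[OF r(2,3)] A_var_iff_rnorm[OF p(2)] A_var_iff_rnorm[OF exps(4)]
      recip_quot_exp inverse_inverse_eq
    using var_exp_log_rnorm_indicator_dual_le[OF assms(2)] p(1) r(1) exps
    by (intro rnorm_A_bounds_of_AA_bound) simp_all
qed

end
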